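(* Let $n\ge2$, let $A$ be a random variable with values in $\{1,\dots,n\}$, $\mathbb{P}(A=i)=p_i$, $\sum_i p_i=1$, and let $(X_1,\dots,X_n)$ be independent of $A$ and multivariate normal with all means equal to $\mu<0$, all variances equal to $\sigma^2>0$, and all pairwise correlations equal to $\rho$. For $z\in\mathbb{R}$ let $h(z)=\mathbb{E}\left[\mathbb{I}(X_A>z)\sum_{i=1}^n X_i\right]$. If $-1/(n-1)<\rho<1$, then $h'(0)>0$, $h$ attains its maximum at \[z^*=\frac{(n-1)(\rho-1)}{(n-1)\rho+1}\,\mu,\] and $h(z^* )>0$.
   Context: $h(z)$ is the long-run average overall performance of a firm that, in each period, picks a primary dimension $A$ and adopts the innovation iff its effect $X_A$ on that dimension exceeds the hurdle rate $z$. *)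

theory Defs
  imports "HOL-Probability.Probability"
begin

text \<open>Gaussian random vector (X_i)_{i in I} with mean vector m and covariance matrix C,
  defined (Cramer-Wold) by: every linear combination sum c_i X_i is a (univariate) normal
  random variable with mean sum c_i m_i and variance sum c_i c_j C_ij; a combination of
  variance zero is almost surely constant.\<close>
definition gaussian_vector ::
  "'a measure \<Rightarrow> nat set \<Rightarrow> (nat \<Rightarrow> 'a \<Rightarrow> real) \<Rightarrow> (nat \<Rightarrow> real) \<Rightarrow> (nat \<Rightarrow> nat \<Rightarrow> real) \<Rightarrow> bool"
where
  "gaussian_vector M I X m C \<longleftrightarrow>
     (\<forall>i\<in>I. X i \<in> borel_measurable M) \<and>
     (\<forall>c :: nat \<Rightarrow> real.
        let Y = (\<lambda>\<omega>. \<Sum>i\<in>I. c i * X i \<omega>);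
            mu = (\<Sum>i\<in>I. c i * m i);
            v = (\<Sum>i\<in>I. \<Sum>j\<in>I. c i * c j * C i j)
        in v \<ge> 0 \<and>
           (v > 0 \<longrightarrow> distributed M lborel Y (\<lambda>x. ennreal (normal_density mu (sqrt v) x))) \<and>
           (v = 0 \<longrightarrow> (AE \<omega> in M. Y \<omega> = mu)))"

definition hfun :: "'a measure \<Rightarrow> nat \<Rightarrow> ('a \<Rightarrow> nat) \<Rightarrow> (nat \<Rightarrow> 'a \<Rightarrow> real) \<Rightarrow> real \<Rightarrow> real" where
  "hfun M n A X z = (\<integral>\<omega>. (if X (A \<omega>) \<omega> > z then 1 else 0) * (\<Sum>i=1..n. X i \<omega>) \<partial>M)"

end

theory Submission
  imports Defs
begin

text \<open>Given \<open>A = i\<close>, the payoff is \<open>1(X\<^sub>i > z) S\<close> with \<open>S = X\<^sub>1 + \<dots> + X\<^sub>n\<close>. Write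
  \<open>S = c X\<^sub>i + b + V\<close> with \<open>c = 1 + (n - 1) \<rho>\<close>, \<open>b = (n - 1)(1 - \<rho>) \<mu>\<close>; the residual \<open>V\<close> is
  uncorrelated with \<open>X\<^sub>i\<close>, hence \<open>E[1(X\<^sub>i > z) V] = 0\<close> and, by independence of \<open>A\<close>,
  \<open>h(z) = \<integral>\<^sub>z\<^sup>\<infinity> \<phi>(x) (c x + b) dx\<close> with \<open>\<phi>\<close> the \<open>N(\<mu>, \<sigma>\<^sup>2)\<close> density. Since \<open>c > 0 > b\<close>, the
  integrand changes sign exactly at \<open>-b/c\<close>, which gives the maximiser, the positivity of the
  maximum and \<open>h'(0) = -\<phi>(0) b > 0\<close>.

  The identity \<open>E[1(X\<^sub>i > z) V] = 0\<close> is obtained without joint distributions: it is the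
  derivative at \<open>t = 0\<close> of \<open>E (X\<^sub>i + t V - z)\<^sup>+\<close>, and \<open>X\<^sub>i + t V\<close> is normal with mean \<open>\<mu>\<close> and
  variance \<open>\<sigma>\<^sup>2 + O(t\<^sup>2)\<close>, so this expectation is \<open>F(\<sigma>) + O(t\<^sup>2)\<close> for a Lipschitz \<open>F\<close>.\<close>

lemma sum_if_eq_else:
  fixes a b :: real
  assumes "finite S" "i \<in> S"
  shows "(\<Sum>j\<in>S. if j = i then a else b) = a + (real (card S) - 1) * b"
proof -
  have "(\<Sum>j\<in>S. if j = i then a else b) = (\<Sum>j\<in>S. b + (if j = i then a - b else 0))"
    by (intro sum.cong) auto
  also have "\<dots> = real (card S) * b + (a - b)"
    using assms by (simp add: sum.distrib)
  finally show ?thesis by (simp add: algebra_simps)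
qed

lemma sum_sum_compound_symmetric:
  fixes a :: "'i \<Rightarrow> real"
  assumes "finite S"
  shows "(\<Sum>i\<in>S. \<Sum>j\<in>S. a i * a j * (if i = j then s else r))
         = (s - r) * (\<Sum>i\<in>S. (a i)\<^sup>2) + r * (\<Sum>i\<in>S. a i)\<^sup>2"
proof -
  have "(\<Sum>j\<in>S. a i * a j * (if i = j then s else r)) = (s - r) * (a i)\<^sup>2 + r * a i * (\<Sum>j\<in>S. a j)"
    if "i \<in> S" for i
  proof -
    have "(\<Sum>j\<in>S. a i * a j * (if i = j then s else r))
        = (\<Sum>j\<in>S. r * a i * a j + (if i = j then (s - r) * a i * a j else 0))"
      by (intro sum.cong) (auto simp: algebra_simps)
    also have "\<dots> = r * a i * (\<Sum>j\<in>S. a j) + (s - r) * (a i)\<^sup>2"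
      using assms that by (simp add: sum.distrib sum_distrib_left power2_eq_square mult.assoc)
    finally show ?thesis by simp
  qed
  then have "(\<Sum>i\<in>S. \<Sum>j\<in>S. a i * a j * (if i = j then s else r))
      = (\<Sum>i\<in>S. (s - r) * (a i)\<^sup>2 + (r * a i) * (\<Sum>j\<in>S. a j))"
    by (intro sum.cong) (simp_all add: mult.assoc)
  also have "\<dots> = (s - r) * (\<Sum>i\<in>S. (a i)\<^sup>2) + r * (\<Sum>i\<in>S. a i) * (\<Sum>j\<in>S. a j)"
    by (simp only: sum.distrib sum_distrib_left[symmetric] sum_distrib_right[symmetric] mult.assoc)
  finally show ?thesis by (simp add: power2_eq_square)
qed

lemma gaussian_vector_measurable:
  "gaussian_vector M I X m C \<Longrightarrow> i \<in> I \<Longrightarrow> X i \<in> borel_measurable M"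
  unfolding gaussian_vector_def by blast

lemma gaussian_vector_combination_distributed:
  assumes "gaussian_vector M I X m C"
    and "(\<Sum>i\<in>I. \<Sum>j\<in>I. c i * c j * C i j) > 0"
  shows "distributed M lborel (\<lambda>\<omega>. \<Sum>i\<in>I. c i * X i \<omega>)
           (\<lambda>x. ennreal (normal_density (\<Sum>i\<in>I. c i * m i) (sqrt (\<Sum>i\<in>I. \<Sum>j\<in>I. c i * c j * C i j)) x))"
  using assms unfolding gaussian_vector_def Let_def by blast

lemma integrable_indicator_comp_mult:
  fixes f g :: "'a \<Rightarrow> real"
  assumes "integrable M f" "g \<in> borel_measurable M" "B \<in> sets borel"
  shows "integrable M (\<lambda>\<omega>. indicator B (g \<omega>) * f \<omega>)"
proof (rule Bochner_Integration.integrable_bound[OF assms(1)])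
  show "(\<lambda>\<omega>. indicator B (g \<omega>) * f \<omega>) \<in> borel_measurable M"
    using assms by measurable
  show "AE x in M. norm (indicator B (g x) * f x) \<le> norm (f x)"
    by (intro AE_I2) (auto simp: indicator_def)
qed

lemma AE_distributed_lborel_neq:
  fixes X :: "'a \<Rightarrow> real"
  assumes "distributed M lborel X f"
  shows "AE \<omega> in M. X \<omega> \<noteq> z"
proof -
  have distr_eq: "distr M lborel X = density lborel f"
    using assms by (simp add: distributed_def)
  have "AE x in distr M lborel X. x \<noteq> z"
    unfolding distr_eq
    by (subst AE_density) (use assms in \<open>auto intro: AE_mp[OF AE_lborel_singleton[of z]]
        simp: distributed_def\<close>)
  then show ?thesis
    using assms by (subst (asm) AE_distr_iff) (auto simp: distributed_def)
qed

lemma abs_max_zero_diff_le: "\<bar>max a 0 - max b 0\<bar> \<le> \<bar>a - b :: real\<bar>"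
  by (simp add: max_def)

definition normal_call :: "real \<Rightarrow> real \<Rightarrow> real \<Rightarrow> real" where
  "normal_call m z s = (\<integral>u. std_normal_density u * max (m + s * u - z) 0 \<partial>lborel)"

lemma integrable_std_normal_mult_max:
  "integrable lborel (\<lambda>u. std_normal_density u * max (m + s * u - z) 0)"
proof (rule Bochner_Integration.integrable_bound)
  have "integrable lborel (\<lambda>u. \<bar>m - z\<bar> * std_normal_density u + \<bar>s\<bar> * (std_normal_density u * \<bar>u\<bar>))"
    using integrable_std_normal_moment_abs[of 1] by auto
  then show "integrable lborel (\<lambda>u. std_normal_density u * (\<bar>m - z\<bar> + \<bar>s\<bar> * \<bar>u\<bar>))"
    by (simp add: algebra_simps)
  have "max (m + s * u - z) 0 \<le> \<bar>m - z\<bar> + \<bar>s\<bar> * \<bar>u\<bar>" for u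
    using abs_triangle_ineq[of "m - z" "s * u"] abs_ge_self[of "m - z + s * u"]
    by (auto simp: abs_mult max_def)
  then show "AE u in lborel. norm (std_normal_density u * max (m + s * u - z) 0)
      \<le> norm (std_normal_density u * (\<bar>m - z\<bar> + \<bar>s\<bar> * \<bar>u\<bar>))"
    by (intro AE_I2) (simp add: abs_mult mult_left_mono)
qed simp

lemma normal_call_lipschitz:
  "\<bar>normal_call m z s - normal_call m z s'\<bar>
     \<le> \<bar>s - s'\<bar> * (\<integral>u. std_normal_density u * \<bar>u\<bar> \<partial>lborel)"
proof -
  let ?f = "\<lambda>s u. std_normal_density u * max (m + s * u - z) 0"
  have diff: "normal_call m z s - normal_call m z s' = (\<integral>u. ?f s u - ?f s' u \<partial>lborel)"
    unfolding normal_call_def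
    by (rule Bochner_Integration.integral_diff[symmetric]) (rule integrable_std_normal_mult_max)+
  have "\<bar>\<integral>u. ?f s u - ?f s' u \<partial>lborel\<bar> \<le> (\<integral>u. \<bar>s - s'\<bar> * (std_normal_density u * \<bar>u\<bar>) \<partial>lborel)"
  proof (rule integral_abs_bound_integral)
    show "integrable lborel (\<lambda>u. \<bar>s - s'\<bar> * (std_normal_density u * \<bar>u\<bar>))"
      using integrable_std_normal_moment_abs[of 1] by auto
    show "integrable lborel (\<lambda>u. ?f s u - ?f s' u)"
      by (intro Bochner_Integration.integrable_diff integrable_std_normal_mult_max)
    fix u :: real
    have "\<bar>max (m + s * u - z) 0 - max (m + s' * u - z) 0\<bar> \<le> \<bar>s - s'\<bar> * \<bar>u\<bar>"
      using abs_max_zero_diff_le[of "m + s * u - z" "m + s' * u - z"]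
      by (simp add: abs_mult[symmetric] left_diff_distrib)
    then have "std_normal_density u * \<bar>max (m + s * u - z) 0 - max (m + s' * u - z) 0\<bar>
        \<le> std_normal_density u * (\<bar>s - s'\<bar> * \<bar>u\<bar>)"
      by (intro mult_left_mono) auto
    then show "\<bar>?f s u - ?f s' u\<bar> \<le> \<bar>s - s'\<bar> * (std_normal_density u * \<bar>u\<bar>)"
      by (simp add: right_diff_distrib[symmetric] abs_mult mult_ac)
  qed
  also have "\<dots> = \<bar>s - s'\<bar> * (\<integral>u. std_normal_density u * \<bar>u\<bar> \<partial>lborel)"
    by (rule integral_mult_right_zero)
  finally show ?thesis
    unfolding diff .
qed

lemma (in prob_space) integral_max_normal:
  assumes "distributed M lborel Y (\<lambda>x. ennreal (normal_density m s x))" and "s > 0"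
  shows "(\<integral>\<omega>. max (Y \<omega> - z) 0 \<partial>M) = normal_call m z s"
proof -
  have "distributed M lborel (\<lambda>\<omega>. (Y \<omega> - m) / s) std_normal_density"
    using normal_standard_normal_convert[OF assms(2)] assms(1) by simp
  from distributed_integral[OF this, of "\<lambda>u. max (m + s * u - z) 0"]
  show ?thesis
    using assms(2) by (simp add: normal_call_def)
qed

lemma abs_sqrt_add_power2_minus_le:
  fixes \<sigma> \<kappa> t :: real
  assumes "\<sigma> > 0" "\<kappa> \<ge> 0"
  shows "\<bar>sqrt (\<sigma>\<^sup>2 + \<kappa> * t\<^sup>2) - \<sigma>\<bar> \<le> \<kappa> * t\<^sup>2 / \<sigma>"
proof -
  define s where "s = sqrt (\<sigma>\<^sup>2 + \<kappa> * t\<^sup>2)"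
  have "s \<ge> \<sigma>"
    unfolding s_def using assms by (intro real_le_rsqrt) simp
  have "s\<^sup>2 = \<sigma>\<^sup>2 + \<kappa> * t\<^sup>2"
    unfolding s_def using assms by simp
  then have "s - \<sigma> = \<kappa> * t\<^sup>2 / (s + \<sigma>)"
    using assms \<open>s \<ge> \<sigma>\<close> by (simp add: eq_divide_eq algebra_simps power2_eq_square)
  also have "\<dots> \<le> \<kappa> * t\<^sup>2 / \<sigma>"
    using assms \<open>s \<ge> \<sigma>\<close> by (intro divide_left_mono) auto
  finally show ?thesis
    using \<open>s \<ge> \<sigma>\<close> unfolding s_def by simp
qed

lemma tendsto_max_difference_quotient:
  fixes t :: "nat \<Rightarrow> real"
  assumes "x \<noteq> z" "t \<longlonglongrightarrow> 0" and t_pos: "\<And>k. t k > 0"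
  shows "(\<lambda>k. (max (x + t k * v - z) 0 - max (x - z) 0) / t k) \<longlonglongrightarrow> indicator {z<..} x * v"
proof (rule tendsto_eventually)
  have "(\<lambda>k. t k * \<bar>v\<bar>) \<longlonglongrightarrow> 0"
    by (rule tendsto_mult_left_zero[OF assms(2)])
  then have "\<forall>\<^sub>F k in sequentially. t k * \<bar>v\<bar> < \<bar>x - z\<bar>"
    using \<open>x \<noteq> z\<close> by (intro order_tendstoD(2)) auto
  then show "\<forall>\<^sub>F k in sequentially. (max (x + t k * v - z) 0 - max (x - z) 0) / t k = indicator {z<..} x * v"
  proof eventually_elim
    fix k assume "t k * \<bar>v\<bar> < \<bar>x - z\<bar>"
    then have "\<bar>t k * v\<bar> < \<bar>x - z\<bar>"
      using t_pos[of k] by (simp add: abs_mult)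
    then show "(max (x + t k * v - z) 0 - max (x - z) 0) / t k = indicator {z<..} x * v"
      using t_pos[of k] \<open>x \<noteq> z\<close> by (cases "x > z") (auto simp: max_def)
  qed
qed

lemma tendsto_integral_max_difference_quotient:
  fixes X V :: "'a \<Rightarrow> real" and t :: "nat \<Rightarrow> real"
  assumes [measurable]: "X \<in> borel_measurable M" "V \<in> borel_measurable M"
    and "integrable M V" and "AE \<omega> in M. X \<omega> \<noteq> z"
    and "t \<longlonglongrightarrow> 0" and t_pos: "\<And>k. t k > 0"
  shows "(\<lambda>k. \<integral>\<omega>. (max (X \<omega> + t k * V \<omega> - z) 0 - max (X \<omega> - z) 0) / t k \<partial>M)
           \<longlonglongrightarrow> (\<integral>\<omega>. indicator {z<..} (X \<omega>) * V \<omega> \<partial>M)"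
proof (rule integral_dominated_convergence[where w="\<lambda>\<omega>. \<bar>V \<omega>\<bar>"])
  show "integrable M (\<lambda>\<omega>. \<bar>V \<omega>\<bar>)"
    using assms(3) by auto
  show "AE \<omega> in M. norm ((max (X \<omega> + t k * V \<omega> - z) 0 - max (X \<omega> - z) 0) / t k) \<le> \<bar>V \<omega>\<bar>" for k
  proof (intro AE_I2)
    fix \<omega>
    have "\<bar>max (X \<omega> + t k * V \<omega> - z) 0 - max (X \<omega> - z) 0\<bar> \<le> t k * \<bar>V \<omega>\<bar>"
      using abs_max_zero_diff_le[of "X \<omega> + t k * V \<omega> - z" "X \<omega> - z"] t_pos[of k]
      by (simp add: abs_mult)
    then show "norm ((max (X \<omega> + t k * V \<omega> - z) 0 - max (X \<omega> - z) 0) / t k) \<le> \<bar>V \<omega>\<bar>"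
      using t_pos[of k] by (simp add: divide_le_eq mult.commute)
  qed
  show "AE \<omega> in M. (\<lambda>k. (max (X \<omega> + t k * V \<omega> - z) 0 - max (X \<omega> - z) 0) / t k)
      \<longlonglongrightarrow> indicator {z<..} (X \<omega>) * V \<omega>"
    using assms(4) by eventually_elim (erule tendsto_max_difference_quotient[OF _ assms(5) t_pos])
qed measurable

lemma (in finite_measure) integrable_max_add_mult:
  fixes X V :: "'a \<Rightarrow> real"
  assumes "integrable M X" "integrable M V"
  shows "integrable M (\<lambda>\<omega>. max (X \<omega> + r * V \<omega> - z) 0)"
proof (rule Bochner_Integration.integrable_bound)
  show "integrable M (\<lambda>\<omega>. \<bar>X \<omega>\<bar> + \<bar>r\<bar> * \<bar>V \<omega>\<bar> + \<bar>z\<bar>)"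
    using assms by auto
  have "max (X \<omega> + r * V \<omega> - z) 0 \<le> \<bar>X \<omega>\<bar> + \<bar>r\<bar> * \<bar>V \<omega>\<bar> + \<bar>z\<bar>" for \<omega>
    using abs_triangle_ineq[of "X \<omega>" "r * V \<omega>"] abs_ge_self[of "X \<omega> + r * V \<omega>"]
    by (auto simp: abs_mult max_def)
  then show "AE \<omega> in M. norm (max (X \<omega> + r * V \<omega> - z) 0) \<le> norm (\<bar>X \<omega>\<bar> + \<bar>r\<bar> * \<bar>V \<omega>\<bar> + \<bar>z\<bar>)"
    by (intro AE_I2) simp
qed (use assms in \<open>auto dest: borel_measurable_integrable\<close>)

lemma normal_call_difference_quotient_tendsto_0:
  fixes t :: "nat \<Rightarrow> real"
  assumes "\<sigma> > 0" "\<kappa> \<ge> 0" "t \<longlonglongrightarrow> 0" and t_pos: "\<And>k. t k > 0"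
  shows "(\<lambda>k. (normal_call m z (sqrt (\<sigma>\<^sup>2 + \<kappa> * (t k)\<^sup>2)) - normal_call m z \<sigma>) / t k) \<longlonglongrightarrow> 0"
proof (rule Lim_null_comparison)
  define K where "K = (\<integral>u. std_normal_density u * \<bar>u\<bar> \<partial>lborel)"
  have "K \<ge> 0"
    unfolding K_def by (intro integral_nonneg_AE) auto
  show "\<forall>\<^sub>F k in sequentially.
      norm ((normal_call m z (sqrt (\<sigma>\<^sup>2 + \<kappa> * (t k)\<^sup>2)) - normal_call m z \<sigma>) / t k) \<le> K * \<kappa> / \<sigma> * t k"
  proof (intro always_eventually allI)
    fix k
    let ?s = "sqrt (\<sigma>\<^sup>2 + \<kappa> * (t k)\<^sup>2)"
    have "norm ((normal_call m z ?s - normal_call m z \<sigma>) / t k) \<le> (\<bar>?s - \<sigma>\<bar> * K) / t k"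
      using t_pos[of k] normal_call_lipschitz[of m z ?s \<sigma>]
      by (simp add: K_def divide_right_mono)
    also have "\<dots> \<le> ((\<kappa> * (t k)\<^sup>2 / \<sigma>) * K) / t k"
      using t_pos[of k] \<open>K \<ge> 0\<close> abs_sqrt_add_power2_minus_le[OF assms(1,2)]
      by (intro divide_right_mono mult_right_mono) auto
    also have "\<dots> = K * \<kappa> / \<sigma> * t k"
      using t_pos[of k] by (simp add: power2_eq_square)
    finally show "norm ((normal_call m z ?s - normal_call m z \<sigma>) / t k) \<le> K * \<kappa> / \<sigma> * t k" .
  qed
  show "(\<lambda>k. K * \<kappa> / \<sigma> * t k) \<longlonglongrightarrow> 0"
    using tendsto_mult_right_zero[OF assms(3), of "K * \<kappa> / \<sigma>"] by simp
qed

lemma (in prob_space) integral_indicator_mult_eq_0_if_normal_perturbation: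
  fixes X V :: "'a \<Rightarrow> real"
  assumes [measurable]: "X \<in> borel_measurable M" "V \<in> borel_measurable M"
    and "integrable M X" "integrable M V"
    and "\<sigma> > 0" "\<kappa> \<ge> 0"
    and perturbed: "\<And>t. distributed M lborel (\<lambda>\<omega>. X \<omega> + t * V \<omega>)
               (\<lambda>x. ennreal (normal_density m (sqrt (\<sigma>\<^sup>2 + \<kappa> * t\<^sup>2)) x))"
  shows "(\<integral>\<omega>. indicator {z<..} (X \<omega>) * V \<omega> \<partial>M) = 0"
proof -
  define t where "t k = inverse (real (Suc k))" for k
  have t_pos: "t k > 0" for k
    unfolding t_def by simp
  have t_lim: "t \<longlonglongrightarrow> 0"
    unfolding t_def by (rule LIMSEQ_inverse_real_of_nat)
  let ?q = "\<lambda>k \<omega>. (max (X \<omega> + t k * V \<omega> - z) 0 - max (X \<omega> - z) 0) / t k"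
  have quotient_eq: "(\<lambda>k. \<integral>\<omega>. ?q k \<omega> \<partial>M)
      = (\<lambda>k. (normal_call m z (sqrt (\<sigma>\<^sup>2 + \<kappa> * (t k)\<^sup>2)) - normal_call m z \<sigma>) / t k)"
  proof
    fix k
    have "sqrt (\<sigma>\<^sup>2 + \<kappa> * (t k)\<^sup>2) > 0"
      using assms(5,6) by (intro real_sqrt_gt_zero add_pos_nonneg) auto
    moreover have "(\<integral>\<omega>. ?q k \<omega> \<partial>M)
        = ((\<integral>\<omega>. max (X \<omega> + t k * V \<omega> - z) 0 \<partial>M) - (\<integral>\<omega>. max (X \<omega> + 0 * V \<omega> - z) 0 \<partial>M)) / t k"
      using integrable_max_add_mult[OF assms(3,4), of "t k"] integrable_max_add_mult[OF assms(3,4), of 0]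
      by simp
    ultimately show "(\<integral>\<omega>. ?q k \<omega> \<partial>M)
        = (normal_call m z (sqrt (\<sigma>\<^sup>2 + \<kappa> * (t k)\<^sup>2)) - normal_call m z \<sigma>) / t k"
      using integral_max_normal[OF perturbed] integral_max_normal[OF perturbed[of 0]] assms(5) by simp
  qed
  have "(\<lambda>k. \<integral>\<omega>. ?q k \<omega> \<partial>M) \<longlonglongrightarrow> 0"
    unfolding quotient_eq by (rule normal_call_difference_quotient_tendsto_0[OF assms(5,6) t_lim t_pos])
  moreover have "(\<lambda>k. \<integral>\<omega>. ?q k \<omega> \<partial>M) \<longlonglongrightarrow> (\<integral>\<omega>. indicator {z<..} (X \<omega>) * V \<omega> \<partial>M)"
    using assms(4) t_lim t_pos AE_distributed_lborel_neq[OF perturbed[of 0]]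
    by (intro tendsto_integral_max_difference_quotient) auto
  ultimately show ?thesis
    using LIMSEQ_unique by blast
qed

definition tail_integral :: "(real \<Rightarrow> real) \<Rightarrow> real \<Rightarrow> real" where
  "tail_integral G z = (\<integral>x. indicator {z<..} x * G x \<partial>lborel)"

lemma tail_integral_diff:
  assumes "integrable lborel G"
  shows "tail_integral G z - tail_integral G w
           = (\<integral>x. (indicator {z<..} x - indicator {w<..} x) * G x \<partial>lborel)"
  unfolding tail_integral_def left_diff_distrib
  using integrable_mult_indicator[of "{z<..}" lborel G] integrable_mult_indicator[of "{w<..}" lborel G] assms
  by (subst Bochner_Integration.integral_diff) auto

lemma tail_integral_eq_minus_interval_integral:
  assumes "integrable lborel G"
  shows "tail_integral G w = tail_integral G z - (LBINT y=z..w. G y)"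
proof (cases "z \<le> w")
  case True
  have "tail_integral G z - tail_integral G w = (\<integral>x. indicator {z<..w} x * G x \<partial>lborel)"
    unfolding tail_integral_diff[OF assms]
    using True by (intro Bochner_Integration.integral_cong) (auto simp: indicator_def)
  also have "\<dots> = (LBINT y=z..w. G y)"
    using True interval_integral_Ioc[of z w G] by (simp add: set_lebesgue_integral_def)
  finally show ?thesis by simp
next
  case False
  have "tail_integral G w - tail_integral G z = (\<integral>x. indicator {w<..z} x * G x \<partial>lborel)"
    unfolding tail_integral_diff[OF assms]
    using False by (intro Bochner_Integration.integral_cong) (auto simp: indicator_def)
  also have "\<dots> = (LBINT y=w..z. G y)"
    using False interval_integral_Ioc[of w z G] by (simp add: set_lebesgue_integral_def)
  also have "\<dots> = - (LBINT y=z..w. G y)"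
    by (rule interval_integral_endpoints_reverse)
  finally show ?thesis by simp
qed

lemma has_real_derivative_tail_integral:
  assumes "integrable lborel G" "continuous_on UNIV G"
  shows "(tail_integral G has_real_derivative - G z) (at z)"
proof -
  have "((\<lambda>w. LBINT y=z..w. G y) has_vector_derivative G z) (at z within {z-1..z+1})"
    using assms(2) by (intro interval_integral_FTC2) (auto intro: continuous_on_subset)
  moreover have "at z within {z-1..z+1} = at z"
    by (rule at_within_interior) simp
  ultimately have "((\<lambda>w. LBINT y=z..w. G y) has_real_derivative G z) (at z)"
    by (simp add: has_real_derivative_iff_has_vector_derivative)
  then have "((\<lambda>w. tail_integral G z - (LBINT y=z..w. G y)) has_real_derivative 0 - G z) (at z)"
    by (intro DERIV_diff DERIV_const)
  then show ?thesis
    unfolding tail_integral_eq_minus_interval_integral[OF assms(1), of _ z, symmetric] by simp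
qed

lemma tail_integral_le_at_sign_change:
  assumes "integrable lborel G"
    and "\<And>x. x \<le> z\<^sub>0 \<Longrightarrow> G x \<le> 0" and "\<And>x. x > z\<^sub>0 \<Longrightarrow> G x \<ge> 0"
  shows "tail_integral G z \<le> tail_integral G z\<^sub>0"
proof -
  have "(\<integral>x. (indicator {z<..} x - indicator {z\<^sub>0<..} x) * G x \<partial>lborel) \<le> (\<integral>x. 0 \<partial>(lborel :: real measure))"
  proof (rule Bochner_Integration.integral_mono)
    show "integrable lborel (\<lambda>x. (indicator {z<..} x - indicator {z\<^sub>0<..} x) * G x)"
      using integrable_mult_indicator[of "{z<..}" lborel G]
        integrable_mult_indicator[of "{z\<^sub>0<..}" lborel G] assms(1)
      by (auto simp: left_diff_distrib)
    show "(indicator {z<..} x - indicator {z\<^sub>0<..} x) * G x \<le> 0" for x :: real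
      using assms(2,3)[of x] by (cases "x \<le> z\<^sub>0") (auto simp: indicator_def mult_nonneg_nonpos)
  qed simp
  then show ?thesis
    using tail_integral_diff[OF assms(1), of z z\<^sub>0] by simp
qed

lemma tail_integral_pos:
  assumes "integrable lborel G" and pos: "\<And>x. x > z\<^sub>0 \<Longrightarrow> G x > 0"
  shows "tail_integral G z\<^sub>0 > 0"
proof -
  have tail_eq: "tail_integral G z\<^sub>0 = (\<integral>x\<in>{z\<^sub>0<..}. G x \<partial>lborel)"
    by (simp add: tail_integral_def set_lebesgue_integral_def)
  have "tail_integral G z\<^sub>0 \<ge> 0"
    unfolding tail_integral_def
    using pos by (intro integral_nonneg_AE AE_I2) (auto simp: indicator_def less_imp_le)
  moreover have "tail_integral G z\<^sub>0 \<noteq> 0"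
  proof
    assume "tail_integral G z\<^sub>0 = 0"
    then have "{z\<^sub>0<..} \<in> null_sets lborel"
      using assms by (intro null_if_pos_func_has_zero_int[of lborel G]) (auto simp: tail_eq)
    moreover have "emeasure lborel {z\<^sub>0<..<z\<^sub>0 + 1} \<le> emeasure lborel {z\<^sub>0<..}"
      by (rule emeasure_mono) auto
    ultimately show False
      by (simp add: null_sets_def)
  qed
  ultimately show ?thesis by simp
qed

lemma (in finite_measure) integral_indicator_mult_indep:
  fixes N :: "'b measure" and Y :: "'a \<Rightarrow> 'b" and g :: "'b \<Rightarrow> real"
  assumes [measurable]: "Y \<in> measurable M N" "{\<omega>\<in>space M. Q \<omega>} \<in> sets M" "g \<in> borel_measurable N"
    and indep: "\<And>B. B \<in> sets N \<Longrightarrow> measure M {\<omega>\<in>space M. Q \<omega> \<and> Y \<omega> \<in> B}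
               = measure M {\<omega>\<in>space M. Q \<omega>} * measure M {\<omega>\<in>space M. Y \<omega> \<in> B}"
  shows "(\<integral>\<omega>. indicator {\<omega>\<in>space M. Q \<omega>} \<omega> * g (Y \<omega>) \<partial>M)
         = measure M {\<omega>\<in>space M. Q \<omega>} * (\<integral>\<omega>. g (Y \<omega>) \<partial>M)"
proof -
  define E where "E = {\<omega>\<in>space M. Q \<omega>}"
  have [measurable]: "E \<in> sets M"
    unfolding E_def by fact
  have distr_eq: "distr (density M (\<lambda>\<omega>. ennreal (indicator E \<omega>))) N Y = density (distr M N Y) (\<lambda>_. ennreal (measure M E))"
  proof (rule measure_eqI)
    fix B assume "B \<in> sets (distr (density M (\<lambda>\<omega>. ennreal (indicator E \<omega>))) N Y)"
    then have B[measurable]: "B \<in> sets N" by simp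
    have "emeasure (distr (density M (\<lambda>\<omega>. ennreal (indicator E \<omega>))) N Y) B
        = (\<integral>\<^sup>+\<omega>. ennreal (indicator E \<omega>) * indicator (Y -` B \<inter> space M) \<omega> \<partial>M)"
      by (subst emeasure_distr) (auto simp: emeasure_density)
    also have "\<dots> = (\<integral>\<^sup>+\<omega>. indicator {\<omega>\<in>space M. Q \<omega> \<and> Y \<omega> \<in> B} \<omega> \<partial>M)"
      by (intro nn_integral_cong) (auto simp: E_def indicator_def)
    also have "\<dots> = emeasure M {\<omega>\<in>space M. Q \<omega> \<and> Y \<omega> \<in> B}"
      by (rule nn_integral_indicator) measurable
    also have "\<dots> = ennreal (measure M E) * emeasure M (Y -` B \<inter> space M)"
      using indep[OF B] by (simp add: emeasure_eq_measure ennreal_mult E_def Int_def conj_commute)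
    also have "\<dots> = emeasure (density (distr M N Y) (\<lambda>_. ennreal (measure M E))) B"
      by (simp add: emeasure_density nn_integral_cmult_indicator emeasure_distr)
    finally show "emeasure (distr (density M (\<lambda>\<omega>. ennreal (indicator E \<omega>))) N Y) B
        = emeasure (density (distr M N Y) (\<lambda>_. ennreal (measure M E))) B" .
  qed simp
  have "(\<integral>\<omega>. indicator E \<omega> * g (Y \<omega>) \<partial>M) = (\<integral>x. g x \<partial>distr (density M (\<lambda>\<omega>. ennreal (indicator E \<omega>))) N Y)"
    by (simp add: integral_distr integral_density)
  also have "\<dots> = measure M E * (\<integral>\<omega>. g (Y \<omega>) \<partial>M)"
    unfolding distr_eq by (simp add: integral_density integral_distr)
  finally show ?thesis
    unfolding E_def .
qed

lemma (in prob_space) sum_prob_eq_1: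
  assumes "finite I" "A \<in> measurable M (count_space UNIV)" "\<And>\<omega>. \<omega> \<in> space M \<Longrightarrow> A \<omega> \<in> I"
  shows "(\<Sum>i\<in>I. prob {\<omega>\<in>space M. A \<omega> = i}) = 1"
proof -
  have "(\<Sum>i\<in>I. prob {\<omega>\<in>space M. A \<omega> = i}) = prob (\<Union>i\<in>I. {\<omega>\<in>space M. A \<omega> = i})"
    using assms by (intro finite_measure_finite_Union[symmetric]) (auto simp: disjoint_family_on_def)
  also have "(\<Union>i\<in>I. {\<omega>\<in>space M. A \<omega> = i}) = space M"
    using assms(3) by auto
  finally show ?thesis
    by (simp add: prob_space)
qed

lemma (in prob_space) integral_eq_sum_over_values:
  fixes A :: "'a \<Rightarrow> 'i" and F :: "'i \<Rightarrow> 'a \<Rightarrow> real"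
  assumes "finite I" and [measurable]: "A \<in> measurable M (count_space UNIV)"
    and "\<And>\<omega>. \<omega> \<in> space M \<Longrightarrow> A \<omega> \<in> I" and "\<And>i. i \<in> I \<Longrightarrow> integrable M (F i)"
  shows "(\<integral>\<omega>. F (A \<omega>) \<omega> \<partial>M) = (\<Sum>i\<in>I. \<integral>\<omega>. indicator {\<omega>\<in>space M. A \<omega> = i} \<omega> * F i \<omega> \<partial>M)"
proof -
  have "(\<integral>\<omega>. F (A \<omega>) \<omega> \<partial>M) = (\<integral>\<omega>. (\<Sum>i\<in>I. indicator {\<omega>\<in>space M. A \<omega> = i} \<omega> * F i \<omega>) \<partial>M)"
  proof (intro Bochner_Integration.integral_cong refl)
    fix \<omega> assume "\<omega> \<in> space M"
    then have "(\<Sum>i\<in>I. indicator {\<omega>\<in>space M. A \<omega> = i} \<omega> * F i \<omega>) = (\<Sum>i\<in>I. if A \<omega> = i then F i \<omega> else 0)"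
      by (intro sum.cong) auto
    also have "\<dots> = F (A \<omega>) \<omega>"
      using assms(1,3) \<open>\<omega> \<in> space M\<close> by (simp add: sum.delta')
    finally show "F (A \<omega>) \<omega> = (\<Sum>i\<in>I. indicator {\<omega>\<in>space M. A \<omega> = i} \<omega> * F i \<omega>)" ..
  qed
  also have "\<dots> = (\<Sum>i\<in>I. \<integral>\<omega>. indicator {\<omega>\<in>space M. A \<omega> = i} \<omega> * F i \<omega> \<partial>M)"
  proof (rule Bochner_Integration.integral_sum)
    fix i assume "i \<in> I"
    then show "integrable M (\<lambda>\<omega>. indicator {\<omega>\<in>space M. A \<omega> = i} \<omega> * F i \<omega>)"
      using integrable_real_mult_indicator[of "{\<omega>\<in>space M. A \<omega> = i}" M "F i"] assms(4)
      by (simp add: mult.commute)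
  qed
  finally show ?thesis .
qed

locale equicorrelated_gaussian = prob_space M for M :: "'a measure" +
  fixes n :: nat and X :: "nat \<Rightarrow> 'a \<Rightarrow> real" and \<mu> \<sigma> \<rho> :: real
  assumes n_ge_2: "n \<ge> 2"
    and gaussian: "gaussian_vector M {1..n} X (\<lambda>i. \<mu>) (\<lambda>i j. if i = j then \<sigma>\<^sup>2 else \<rho> * \<sigma>\<^sup>2)"
    and sigma_pos: "\<sigma> > 0"
    and rho_gt: "- 1 / (real n - 1) < \<rho>" and rho_lt: "\<rho> < 1"
begin

definition slope :: real where
  "slope = 1 + (real n - 1) * \<rho>"

definition intercept :: real where
  "intercept = (real n - 1) * (1 - \<rho>) * \<mu>"

text \<open>\<open>slope * x + intercept\<close> is the regression \<open>E[X\<^sub>1 + \<dots> + X\<^sub>n | X\<^sub>i = x]\<close>.\<close>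

definition regression_density :: "real \<Rightarrow> real" where
  "regression_density x = normal_density \<mu> \<sigma> x * (slope * x + intercept)"

lemma slope_pos: "slope > 0"
proof -
  have "real n - 1 > 0"
    using n_ge_2 by simp
  then have "- 1 < \<rho> * (real n - 1)"
    using rho_gt by (simp add: field_simps)
  then show ?thesis
    unfolding slope_def by (simp add: mult.commute)
qed

lemma X_measurable[measurable]: "i \<in> {1..n} \<Longrightarrow> X i \<in> borel_measurable M"
  using gaussian by (rule gaussian_vector_measurable)

lemma one_vs_rest_distributed:
  assumes i: "i \<in> {1..n}"
    and v: "v = (1 - \<rho>) * \<sigma>\<^sup>2 * (p\<^sup>2 + (real n - 1) * q\<^sup>2) + \<rho> * \<sigma>\<^sup>2 * (p + (real n - 1) * q)\<^sup>2"
    and "v > 0"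
  shows "distributed M lborel (\<lambda>\<omega>. p * X i \<omega> + q * ((\<Sum>j\<in>{1..n}. X j \<omega>) - X i \<omega>))
           (\<lambda>x. ennreal (normal_density (\<mu> * (p + (real n - 1) * q)) (sqrt v) x))"
proof -
  let ?c = "\<lambda>j. if j = i then p else q"
  have sum_c: "(\<Sum>j\<in>{1..n}. ?c j) = p + (real n - 1) * q"
    using sum_if_eq_else[of "{1..n}" i p q] i by simp
  have "(\<Sum>j\<in>{1..n}. (?c j)\<^sup>2) = (\<Sum>j\<in>{1..n}. if j = i then p\<^sup>2 else q\<^sup>2)"
    by (intro sum.cong) auto
  also have "\<dots> = p\<^sup>2 + (real n - 1) * q\<^sup>2"
    using sum_if_eq_else[of "{1..n}" i "p\<^sup>2" "q\<^sup>2"] i by simp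
  finally have sum_c2: "(\<Sum>j\<in>{1..n}. (?c j)\<^sup>2) = p\<^sup>2 + (real n - 1) * q\<^sup>2" .
  have var: "(\<Sum>j\<in>{1..n}. \<Sum>k\<in>{1..n}. ?c j * ?c k * (if j = k then \<sigma>\<^sup>2 else \<rho> * \<sigma>\<^sup>2)) = v"
    unfolding sum_sum_compound_symmetric[OF finite_atLeastAtMost] sum_c sum_c2 v
    by (simp add: algebra_simps)
  have "(\<Sum>j\<in>{1..n}. ?c j * X j \<omega>) = p * X i \<omega> + q * ((\<Sum>j\<in>{1..n}. X j \<omega>) - X i \<omega>)" for \<omega>
    unfolding sum.remove[OF finite_atLeastAtMost i] by (simp add: sum_distrib_left)
  moreover have "(\<Sum>j\<in>{1..n}. ?c j * \<mu>) = \<mu> * (p + (real n - 1) * q)"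
    unfolding sum_distrib_right[symmetric] sum_c by (rule mult.commute)
  ultimately show ?thesis
    using gaussian_vector_combination_distributed[OF gaussian, of ?c] var \<open>v > 0\<close> by simp
qed

lemma X_distributed: "i \<in> {1..n} \<Longrightarrow> distributed M lborel (X i) (\<lambda>x. ennreal (normal_density \<mu> \<sigma> x))"
  using one_vs_rest_distributed[of i _ 1 0] sigma_pos by (simp add: algebra_simps)

lemma integrable_X: "i \<in> {1..n} \<Longrightarrow> integrable M (X i)"
  using distributed_integrable_var[OF X_distributed] integrable_normal_moment_nz_1[OF sigma_pos] by simp

lemma perturbed_distributed:
  assumes i: "i \<in> {1..n}"
  shows "distributed M lborel
           (\<lambda>\<omega>. X i \<omega> + t * ((\<Sum>j\<in>{1..n}. X j \<omega>) - slope * X i \<omega> - intercept))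
           (\<lambda>x. ennreal (normal_density \<mu>
              (sqrt (\<sigma>\<^sup>2 + (1 - \<rho>) * \<sigma>\<^sup>2 * (real n - 1) * slope * t\<^sup>2)) x))"
proof -
  define v where "v = \<sigma>\<^sup>2 + (1 - \<rho>) * \<sigma>\<^sup>2 * (real n - 1) * slope * t\<^sup>2"
  have "v > 0"
    unfolding v_def using sigma_pos slope_pos rho_lt n_ge_2
    by (intro add_pos_nonneg) auto
  have "v = (1 - \<rho>) * \<sigma>\<^sup>2 * ((1 + t * (1 - slope))\<^sup>2 + (real n - 1) * t\<^sup>2)
      + \<rho> * \<sigma>\<^sup>2 * ((1 + t * (1 - slope)) + (real n - 1) * t)\<^sup>2"
    unfolding v_def slope_def by (simp add: algebra_simps power2_eq_square)
  from one_vs_rest_distributed[OF i this \<open>v > 0\<close>]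
  have "distributed M lborel
      (\<lambda>\<omega>. - (t * intercept) + 1 * ((1 + t * (1 - slope)) * X i \<omega> + t * ((\<Sum>j\<in>{1..n}. X j \<omega>) - X i \<omega>)))
      (\<lambda>x. ennreal (normal_density (- (t * intercept) + 1 * (\<mu> * ((1 + t * (1 - slope)) + (real n - 1) * t)))
         (\<bar>1\<bar> * sqrt v) x))"
    using \<open>v > 0\<close> by (intro normal_density_affine) auto
  then show ?thesis
    unfolding v_def[symmetric] by (simp add: slope_def intercept_def algebra_simps)
qed

lemma integrable_regression_density: "integrable lborel regression_density"
proof -
  have "integrable lborel (\<lambda>x. slope * (normal_density \<mu> \<sigma> x * x) + intercept * normal_density \<mu> \<sigma> x)"
    using integrable_normal_moment_nz_1[OF sigma_pos, of \<mu>] integrable_normal_density[OF sigma_pos, of \<mu>]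
    by auto
  then show ?thesis
    unfolding regression_density_def by (simp add: algebra_simps)
qed

lemma continuous_regression_density: "continuous_on UNIV regression_density"
  unfolding regression_density_def normal_density_def using sigma_pos
  by (intro continuous_intros) auto

lemma regression_density_pos_iff: "regression_density x > 0 \<longleftrightarrow> x > - intercept / slope"
proof -
  have "regression_density x > 0 \<longleftrightarrow> slope * x + intercept > 0"
    unfolding regression_density_def using normal_density_pos[OF sigma_pos, of \<mu> x]
    by (auto simp: zero_less_mult_iff)
  also have "\<dots> \<longleftrightarrow> x > - intercept / slope"
    by (subst pos_divide_less_eq[OF slope_pos]) (auto simp: mult.commute)
  finally show ?thesis .
qed

lemma tail_integral_regression_density_le:
  "tail_integral regression_density z \<le> tail_integral regression_density (- intercept / slope)"
proof (rule tail_integral_le_at_sign_change[OF integrable_regression_density])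
  show "regression_density x \<le> 0" if "x \<le> - intercept / slope" for x
    using that regression_density_pos_iff[of x] by (meson not_le)
  show "regression_density x \<ge> 0" if "x > - intercept / slope" for x
    using that regression_density_pos_iff[of x] by simp
qed

lemma tail_integral_regression_density_pos:
  "tail_integral regression_density (- intercept / slope) > 0"
  using regression_density_pos_iff by (intro tail_integral_pos integrable_regression_density) auto

lemma maximiser_eq: "(real n - 1) * (\<rho> - 1) / ((real n - 1) * \<rho> + 1) * \<mu> = - intercept / slope"
proof -
  have "(real n - 1) * (\<rho> - 1) / ((real n - 1) * \<rho> + 1) * \<mu> = (real n - 1) * (\<rho> - 1) * \<mu> / slope"
    unfolding slope_def by (simp add: add.commute)
  also have "(real n - 1) * (\<rho> - 1) * \<mu> = - intercept"
    unfolding intercept_def by (simp add: algebra_simps)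
  finally show ?thesis .
qed

lemma integral_indicator_mult_sum:
  assumes i: "i \<in> {1..n}"
  shows "(\<integral>\<omega>. indicator {z<..} (X i \<omega>) * (\<Sum>j\<in>{1..n}. X j \<omega>) \<partial>M)
           = tail_integral regression_density z"
proof -
  define V where "V \<omega> = (\<Sum>j\<in>{1..n}. X j \<omega>) - slope * X i \<omega> - intercept" for \<omega>
  have [measurable]: "V \<in> borel_measurable M"
    unfolding V_def using i by measurable
  have "integrable M V"
    unfolding V_def using integrable_X i
    by (intro Bochner_Integration.integrable_diff Bochner_Integration.integrable_sum integrable_mult_right) auto
  have "(\<integral>\<omega>. indicator {z<..} (X i \<omega>) * V \<omega> \<partial>M) = 0"
    using i sigma_pos slope_pos rho_lt n_ge_2 integrable_X[OF i] \<open>integrable M V\<close>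
      perturbed_distributed[OF i, unfolded V_def[symmetric]]
    by (intro integral_indicator_mult_eq_0_if_normal_perturbation
        [where \<kappa> = "(1 - \<rho>) * \<sigma>\<^sup>2 * (real n - 1) * slope"]) auto
  moreover have "integrable M (\<lambda>\<omega>. indicator {z<..} (X i \<omega>) * V \<omega>)"
    and "integrable M (\<lambda>\<omega>. indicator {z<..} (X i \<omega>) * (slope * X i \<omega> + intercept))"
    using \<open>integrable M V\<close> integrable_X[OF i] i
    by (auto intro!: integrable_indicator_comp_mult)
  moreover have "(\<integral>\<omega>. indicator {z<..} (X i \<omega>) * (\<Sum>j\<in>{1..n}. X j \<omega>) \<partial>M)
      = (\<integral>\<omega>. indicator {z<..} (X i \<omega>) * (slope * X i \<omega> + intercept)
            + indicator {z<..} (X i \<omega>) * V \<omega> \<partial>M)"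
    unfolding V_def by (simp add: algebra_simps)
  ultimately have "(\<integral>\<omega>. indicator {z<..} (X i \<omega>) * (\<Sum>j\<in>{1..n}. X j \<omega>) \<partial>M)
      = (\<integral>\<omega>. indicator {z<..} (X i \<omega>) * (slope * X i \<omega> + intercept) \<partial>M)"
    by simp
  also have "\<dots> = (\<integral>x. normal_density \<mu> \<sigma> x * (indicator {z<..} x * (slope * x + intercept)) \<partial>lborel)"
    by (rule distributed_integral[OF X_distributed[OF i], symmetric]) (auto simp: normal_density_nonneg)
  also have "\<dots> = tail_integral regression_density z"
    unfolding tail_integral_def regression_density_def by (simp add: mult_ac)
  finally show ?thesis .
qed

lemma hfun_eq_tail_integral:
  assumes [measurable]: "A \<in> measurable M (count_space UNIV)"
    and A_range: "\<forall>\<omega>\<in>space M. A \<omega> \<in> {1..n}"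
    and indep: "\<forall>i. \<forall>B\<in>sets (PiM {1..n} (\<lambda>_. borel)).
           measure M {\<omega>\<in>space M. A \<omega> = i \<and> restrict (\<lambda>j. X j \<omega>) {1..n} \<in> B}
         = measure M {\<omega>\<in>space M. A \<omega> = i}
           * measure M {\<omega>\<in>space M. restrict (\<lambda>j. X j \<omega>) {1..n} \<in> B}"
  shows "hfun M n A X = tail_integral regression_density"
proof
  fix z
  define F where "F i \<omega> = indicator {z<..} (X i \<omega>) * (\<Sum>j\<in>{1..n}. X j \<omega>)" for i \<omega>
  have "hfun M n A X z = (\<integral>\<omega>. F (A \<omega>) \<omega> \<partial>M)"
    unfolding hfun_def F_def by (simp add: indicator_def of_bool_def)
  also have "\<dots> = (\<Sum>i\<in>{1..n}. \<integral>\<omega>. indicator {\<omega>\<in>space M. A \<omega> = i} \<omega> * F i \<omega> \<partial>M)"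
  proof (rule integral_eq_sum_over_values)
    fix i assume "i \<in> {1..n}"
    then show "integrable M (F i)"
      unfolding F_def using integrable_X
      by (intro integrable_indicator_comp_mult Bochner_Integration.integrable_sum) auto
  qed (use A_range in auto)
  also have "\<dots> = (\<Sum>i\<in>{1..n}. prob {\<omega>\<in>space M. A \<omega> = i} * tail_integral regression_density z)"
  proof (intro sum.cong refl)
    fix i assume i: "i \<in> {1..n}"
    have "(\<integral>\<omega>. indicator {\<omega>\<in>space M. A \<omega> = i} \<omega> * F i \<omega> \<partial>M)
        = prob {\<omega>\<in>space M. A \<omega> = i} * (\<integral>\<omega>. F i \<omega> \<partial>M)"
      using integral_indicator_mult_indep[of "\<lambda>\<omega>. restrict (\<lambda>j. X j \<omega>) {1..n}" "PiM {1..n} (\<lambda>_. borel)" "\<lambda>\<omega>. A \<omega> = i"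
          "\<lambda>x. indicator {z<..} (x i) * (\<Sum>j\<in>{1..n}. x j)"] indep i
      by (simp add: F_def)
    then show "(\<integral>\<omega>. indicator {\<omega>\<in>space M. A \<omega> = i} \<omega> * F i \<omega> \<partial>M)
        = prob {\<omega>\<in>space M. A \<omega> = i} * tail_integral regression_density z"
      unfolding F_def integral_indicator_mult_sum[OF i] .
  qed
  also have "\<dots> = tail_integral regression_density z"
    using sum_prob_eq_1[of "{1..n}" A] A_range by (simp add: sum_distrib_right[symmetric])
  finally show "hfun M n A X z = tail_integral regression_density z" .
qed

end

theorem proposition6:
  fixes M :: "'a measure" and n :: nat and A :: "'a \<Rightarrow> nat"
    and X :: "nat \<Rightarrow> 'a \<Rightarrow> real" and \<mu> \<sigma> \<rho> :: real
  assumes "prob_space M"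
    and "n \<ge> 2"
    and "A \<in> measurable M (count_space UNIV)"
    and "\<forall>\<omega>\<in>space M. A \<omega> \<in> {1..n}"
    and "gaussian_vector M {1..n} X (\<lambda>i. \<mu>)
           (\<lambda>i j. if i = j then \<sigma>\<^sup>2 else \<rho> * \<sigma>\<^sup>2)"
    and "\<forall>i. \<forall>B\<in>sets (PiM {1..n} (\<lambda>_. borel)).
           measure M {\<omega>\<in>space M. A \<omega> = i \<and> restrict (\<lambda>j. X j \<omega>) {1..n} \<in> B}
         = measure M {\<omega>\<in>space M. A \<omega> = i}
           * measure M {\<omega>\<in>space M. restrict (\<lambda>j. X j \<omega>) {1..n} \<in> B}"
    and "\<mu> < 0" and "\<sigma> > 0"
    and "- 1 / (real n - 1) < \<rho>" and "\<rho> < 1"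
  shows "(\<exists>d. (hfun M n A X has_real_derivative d) (at 0) \<and> d > 0)
       \<and> (let zs = (real n - 1) * (\<rho> - 1) / ((real n - 1) * \<rho> + 1) * \<mu>
          in (\<forall>z. hfun M n A X z \<le> hfun M n A X zs) \<and> hfun M n A X zs > 0)"
proof -
  interpret equicorrelated_gaussian M n X \<mu> \<sigma> \<rho>
    using assms(1,2,5,8-10)
    unfolding equicorrelated_gaussian_def equicorrelated_gaussian_axioms_def by blast
  have "intercept < 0"
    unfolding intercept_def using assms(2,7,10) by (simp add: mult_pos_neg)
  then have "- regression_density 0 > 0"
    using normal_density_pos[OF assms(8), of \<mu> 0] by (simp add: regression_density_def mult_pos_neg)
  moreover have "(tail_integral regression_density has_real_derivative - regression_density 0) (at 0)"
    by (intro has_real_derivative_tail_integral integrable_regression_density continuous_regression_density)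
  ultimately show ?thesis
    unfolding hfun_eq_tail_integral[OF assms(3,4,6)] maximiser_eq Let_def
    using tail_integral_regression_density_le tail_integral_regression_density_pos by blast
qed

end
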